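(* Let $k$ be a field, $n\ge1$, and $\underline{V}=(V_0;V_1,\dots,V_n)$ an $n$-subspace. The natural inclusion $\underline{V}^{\mathrm{rig}}\subset\underline{V}$ admits a retraction in the category of $n$-subspaces. More precisely, there exist $1$-subspaces $\underline{V}^1,\dots,\underline{V}^n$ and an isomorphism of $n$-subspaces $\underline{V}\cong\big(\bigoplus_{i=1}^n F^i\underline{V}^i\big)\oplus\underline{V}^{\mathrm{rig}}$ under which the inclusion $\underline{V}^{\mathrm{rig}}\subset\underline{V}$ corresponds to the inclusion of the direct summand.
   Context: An $n$-subspace $\underline{V}$ is a $k$-vector space $V_0$ together with subspaces $V_1,\dots,V_n\subset V_0$; morphisms are linear maps $V_0\to W_0$ carrying each $V_i$ into $W_i$. Its rigidification $\underline{V}^{\mathrm{rig}}$ is the $n$-subspace with $V^{\mathrm{rig}}_i=V_i\cap\big(\sum_{j\neq 0,i}V_j\big)$ for $1\le i\le n$ and $V^{\mathrm{rig}}_0=\sum_{i=1}^nV^{\mathrm{rig}}_i$. For a $1$-subspace $\underline{W}=(W_0;W_1)$, $F^i\underline{W}$ is the $n$-subspace with ambient space $W_0$, $i$-th subspace $W_1$ and all other subspaces $0$. *)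

theory Defs
  imports Main "HOL.Vector_Spaces"
begin

definition n_subspace ::
  "('k::field \<Rightarrow> 'v::ab_group_add \<Rightarrow> 'v) \<Rightarrow> nat \<Rightarrow> 'v set \<Rightarrow> (nat \<Rightarrow> 'v set) \<Rightarrow> bool" where
  "n_subspace scale n V0 V \<longleftrightarrow> module.subspace scale V0 \<and>
     (\<forall>i\<in>{1..n}. module.subspace scale (V i) \<and> V i \<subseteq> V0)"

definition rig_sub ::
  "('k::field \<Rightarrow> 'v::ab_group_add \<Rightarrow> 'v) \<Rightarrow> nat \<Rightarrow> (nat \<Rightarrow> 'v set) \<Rightarrow> nat \<Rightarrow> 'v set" where
  "rig_sub scale n V i = V i \<inter> module.span scale (\<Union>j\<in>{1..n} - {i}. V j)"

definition rig_amb ::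
  "('k::field \<Rightarrow> 'v::ab_group_add \<Rightarrow> 'v) \<Rightarrow> nat \<Rightarrow> (nat \<Rightarrow> 'v set) \<Rightarrow> 'v set" where
  "rig_amb scale n V = module.span scale (\<Union>i\<in>{1..n}. rig_sub scale n V i)"

text \<open>External direct sum (F^1 W^1 \<oplus> ... \<oplus> F^n W^n) \<oplus> R of n-subspaces, realised on
  pairs (f, r) with f i the component in W^i (f i = 0 for i outside 1..n), r in R.
  A 1-subspace W^i is (W0 i; W1 i).\<close>
definition ds_amb :: "nat \<Rightarrow> (nat \<Rightarrow> 'v::zero set) \<Rightarrow> 'v set \<Rightarrow> ((nat \<Rightarrow> 'v) \<times> 'v) set" where
  "ds_amb n W0 R0 = {(f, r). (\<forall>i\<in>{1..n}. f i \<in> W0 i) \<and> (\<forall>i. i \<notin> {1..n} \<longrightarrow> f i = 0) \<and> r \<in> R0}"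

text \<open>j-th subspace of the direct sum: F^i W^i has j-th subspace W1 i if i = j, else 0.\<close>
definition ds_sub :: "(nat \<Rightarrow> 'v::zero set) \<Rightarrow> (nat \<Rightarrow> 'v set) \<Rightarrow> nat \<Rightarrow> ((nat \<Rightarrow> 'v) \<times> 'v) set" where
  "ds_sub W1 R j = {(f, r). f j \<in> W1 j \<and> (\<forall>i. i \<noteq> j \<longrightarrow> f i = 0) \<and> r \<in> R j}"

definition ds_add :: "((nat \<Rightarrow> 'v::plus) \<times> 'v) \<Rightarrow> ((nat \<Rightarrow> 'v) \<times> 'v) \<Rightarrow> ((nat \<Rightarrow> 'v) \<times> 'v)" where
  "ds_add x y = ((\<lambda>i. fst x i + fst y i), snd x + snd y)"

definition ds_scale :: "('k \<Rightarrow> 'v \<Rightarrow> 'v) \<Rightarrow> 'k \<Rightarrow> ((nat \<Rightarrow> 'v) \<times> 'v) \<Rightarrow> ((nat \<Rightarrow> 'v) \<times> 'v)" where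
  "ds_scale scale c x = ((\<lambda>i. scale c (fst x i)), scale c (snd x))"

end

theory Submission
  imports Defs
begin

text \<open>Write \<open>R\<^sub>i\<close> for the rigid subspaces and \<open>R\<^sub>0 = \<Sum> R\<^sub>i\<close>. Choose complements
  \<open>V\<^sub>i = R\<^sub>i \<oplus> C\<^sub>i\<close>. If \<open>\<Sum> c\<^sub>i + r = 0\<close> with \<open>c\<^sub>i \<in> C\<^sub>i\<close> and \<open>r = \<Sum> r\<^sub>i \<in> R\<^sub>0\<close>, then
  the vectors \<open>c\<^sub>i + r\<^sub>i \<in> V\<^sub>i\<close> sum to zero, so each of them lies in the sum of the other \<open>V\<^sub>j\<close>,
  i.e. in \<open>R\<^sub>i\<close>; hence \<open>c\<^sub>i \<in> R\<^sub>i \<inter> C\<^sub>i = 0\<close>. Thus \<open>R\<^sub>0 + \<Sum> C\<^sub>i\<close> is a direct sum, and after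
  adding a complement \<open>D\<close> of it in \<open>V\<^sub>0\<close> to \<open>C\<^sub>1\<close>, the coordinates with respect to
  \<open>V\<^sub>0 = R\<^sub>0 \<oplus> (D \<oplus> C\<^sub>1) \<oplus> C\<^sub>2 \<oplus> \<dots> \<oplus> C\<^sub>n\<close> are the required isomorphism, with
  \<open>W\<^sub>i = (A\<^sub>i; C\<^sub>i)\<close> for the summands \<open>A\<^sub>i\<close> of this decomposition.\<close>

definition decomposition :: "'i set \<Rightarrow> ('i \<Rightarrow> 'v::comm_monoid_add set) \<Rightarrow> ('i \<Rightarrow> 'v) \<Rightarrow> 'v \<Rightarrow> bool"
  where "decomposition K A a v \<longleftrightarrow> (\<forall>k\<in>K. a k \<in> A k) \<and> (\<forall>k. k \<notin> K \<longrightarrow> a k = 0) \<and> sum a K = v"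

definition independent_summands :: "'i set \<Rightarrow> ('i \<Rightarrow> 'v::comm_monoid_add set) \<Rightarrow> bool"
  where "independent_summands K A \<longleftrightarrow> (\<forall>a. decomposition K A a 0 \<longrightarrow> a = (\<lambda>_. 0))"

definition components :: "'i set \<Rightarrow> ('i \<Rightarrow> 'v::comm_monoid_add set) \<Rightarrow> 'v \<Rightarrow> 'i \<Rightarrow> 'v"
  where "components K A v = (SOME a. decomposition K A a v)"

text \<open>Summand \<open>0\<close> is the rigid part; summands \<open>1..n\<close> are the ambient spaces of the \<open>F\<^sup>i W\<^sup>i\<close>.\<close>
definition ds_coords :: "nat \<Rightarrow> (nat \<Rightarrow> 'v::comm_monoid_add set) \<Rightarrow> 'v \<Rightarrow> (nat \<Rightarrow> 'v) \<times> 'v"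
  where "ds_coords n A v = (let a = components {0..n} A v in (a(0 := 0), a 0))"

lemma sum_atLeast0_atMost: "sum a {0..(n::nat)} = a 0 + sum a {1..n}"
  by (metis One_nat_def le0 sum.atLeast_Suc_atMost)

context module
begin

lemma decomposition_add:
  assumes "\<forall>k\<in>K. subspace (A k)" "decomposition K A a x" "decomposition K A b y"
  shows "decomposition K A (\<lambda>k. a k + b k) (x + y)"
  using assms by (auto simp: decomposition_def subspace_add sum.distrib)

lemma decomposition_scale:
  assumes "\<forall>k\<in>K. subspace (A k)" "decomposition K A a x"
  shows "decomposition K A (\<lambda>k. c *s a k) (c *s x)"
  using assms by (auto simp: decomposition_def subspace_scale scale_sum_right)

lemma decomposition_component: "decomposition K A a v \<Longrightarrow> k \<in> K \<Longrightarrow> a k \<in> A k"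
  by (simp add: decomposition_def)

lemma decomposition_unique:
  assumes "\<forall>k\<in>K. subspace (A k)" "independent_summands K A"
    and "decomposition K A a v" "decomposition K A b v"
  shows "a = b"
proof -
  have "decomposition K A (\<lambda>k. a k - b k) 0"
    using assms(1,3,4) by (auto simp: decomposition_def subspace_diff sum_subtractf)
  then show ?thesis
    using assms(2) by (auto simp: independent_summands_def fun_eq_iff)
qed

lemma components_eq:
  assumes "\<forall>k\<in>K. subspace (A k)" "independent_summands K A" "decomposition K A a v"
  shows "components K A v = a"
  unfolding components_def
  using someI[of "\<lambda>a. decomposition K A a v", OF assms(3)] decomposition_unique[OF assms(1,2)] assms(3)
  by blast

lemma decomposition_in_span: "decomposition K A a v \<Longrightarrow> v \<in> span (\<Union>k\<in>K. A k)"
  unfolding decomposition_def by (blast intro: span_sum span_base)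

lemma decomposition_exists:
  assumes "finite K" "\<forall>k\<in>K. subspace (A k)" "v \<in> span (\<Union>k\<in>K. A k)"
  shows "\<exists>a. decomposition K A a v"
  using assms
proof (induction K arbitrary: v rule: finite_induct)
  case empty
  then have "decomposition {} A (\<lambda>_. 0) v"
    by (simp add: decomposition_def)
  then show ?case by blast
next
  case (insert i K)
  have "v \<in> span (A i \<union> (\<Union>k\<in>K. A k))"
    using insert.prems by simp
  then obtain x y where xy: "x \<in> span (A i)" "y \<in> span (\<Union>k\<in>K. A k)" "v = x + y"
    unfolding span_Un by blast
  have "x \<in> A i"
    using xy(1) insert.prems(1) by (metis insertI1 span_eq_iff)
  moreover obtain a where a: "decomposition K A a y"
    using insert.IH insert.prems xy(2) by blast
  moreover have "sum (a(i := x)) K = sum a K"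
    using insert.hyps(2) by (intro sum.cong) auto
  ultimately have "decomposition (insert i K) A (a(i := x)) v"
    using insert.hyps xy(3) by (auto simp: decomposition_def)
  then show ?case by blast
qed

lemma sum_eq_0_imp_in_span_others:
  assumes "finite K" "j \<in> K" "\<forall>k\<in>K. a k \<in> A k" "sum a K = 0"
  shows "a j \<in> span (\<Union>k\<in>K - {j}. A k)"
proof -
  have "a j = - sum a (K - {j})"
    using assms(4) sum.remove[OF assms(1,2), of a] by (simp add: eq_neg_iff_add_eq_0)
  also have "\<dots> \<in> span (\<Union>k\<in>K - {j}. A k)"
    using assms(3) by (blast intro: span_neg span_sum span_base)
  finally show ?thesis .
qed

lemma independent_summands_merge_complement:
  assumes "finite K" "k\<^sub>0 \<in> K" "\<forall>k\<in>K. subspace (A k)" "independent_summands K A"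
    and "subspace D" "span (\<Union>k\<in>K. A k) \<inter> D = {0}"
  shows "independent_summands K (A(k\<^sub>0 := {d + x |d x. d \<in> D \<and> x \<in> A k\<^sub>0}))"
  unfolding independent_summands_def
proof (intro allI impI)
  fix a assume a: "decomposition K (A(k\<^sub>0 := {d + x |d x. d \<in> D \<and> x \<in> A k\<^sub>0})) a 0"
  then have "a k\<^sub>0 \<in> {d + x |d x. d \<in> D \<and> x \<in> A k\<^sub>0}"
    using assms(2) unfolding decomposition_def by fastforce
  then obtain d x where dx: "d \<in> D" "x \<in> A k\<^sub>0" "a k\<^sub>0 = d + x"
    by blast
  have "d + x + sum a (K - {k\<^sub>0}) = 0"
    using a dx(3) sum.remove[OF assms(1,2), of a] by (simp add: decomposition_def)
  then have "sum a (K - {k\<^sub>0}) = - (d + x)"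
    by (metis add.commute eq_neg_iff_add_eq_0)
  moreover have "sum (a(k\<^sub>0 := x)) (K - {k\<^sub>0}) = sum a (K - {k\<^sub>0})"
    by (intro sum.cong) auto
  ultimately have "sum (a(k\<^sub>0 := x)) K = - d"
    using sum.remove[OF assms(1,2), of "a(k\<^sub>0 := x)"] by (simp add: algebra_simps)
  then have "decomposition K A (a(k\<^sub>0 := x)) (- d)"
    using a dx(2) assms(2) unfolding decomposition_def by auto
  then have "- d \<in> span (\<Union>k\<in>K. A k)"
    by (rule decomposition_in_span)
  moreover have "- d \<in> D"
    using assms(5) dx(1) by (rule subspace_neg)
  ultimately have "d = 0"
    using assms(6) by (metis IntI neg_equal_0_iff_equal singletonD)
  then have "a(k\<^sub>0 := x) = (\<lambda>_. 0)"
    using \<open>decomposition K A (a(k\<^sub>0 := x)) (- d)\<close> assms(4)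
    by (simp add: independent_summands_def)
  then show "a = (\<lambda>_. 0)"
    using dx(3) \<open>d = 0\<close> by (metis add_0 fun_upd_apply)
qed

lemma ds_coords_eq:
  assumes "\<forall>k\<in>{0..n}. subspace (A k)" "independent_summands {0..n} A"
    and "decomposition {0..n} A a v"
  shows "ds_coords n A v = (a(0 := 0), a 0)"
  using components_eq[OF assms] by (simp add: ds_coords_def)

lemma ds_coords_add:
  assumes "\<forall>k\<in>{0..n}. subspace (A k)" "independent_summands {0..n} A"
    and "x \<in> span (\<Union>k\<in>{0..n}. A k)" "y \<in> span (\<Union>k\<in>{0..n}. A k)"
  shows "ds_coords n A (x + y) = ds_add (ds_coords n A x) (ds_coords n A y)"
proof -
  obtain a b where ab: "decomposition {0..n} A a x" "decomposition {0..n} A b y"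
    using decomposition_exists[OF finite_atLeastAtMost assms(1)] assms(3,4) by meson
  show ?thesis
    using ds_coords_eq[OF assms(1,2) decomposition_add[OF assms(1) ab]]
      ds_coords_eq[OF assms(1,2) ab(1)] ds_coords_eq[OF assms(1,2) ab(2)]
    by (simp add: ds_add_def fun_eq_iff)
qed

lemma ds_coords_scale:
  assumes "\<forall>k\<in>{0..n}. subspace (A k)" "independent_summands {0..n} A"
    and "x \<in> span (\<Union>k\<in>{0..n}. A k)"
  shows "ds_coords n A (c *s x) = ds_scale scale c (ds_coords n A x)"
proof -
  obtain a where a: "decomposition {0..n} A a x"
    using decomposition_exists[OF finite_atLeastAtMost assms(1,3)] by blast
  show ?thesis
    using ds_coords_eq[OF assms(1,2) decomposition_scale[OF assms(1) a]] ds_coords_eq[OF assms(1,2) a]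
    by (simp add: ds_scale_def fun_eq_iff)
qed

lemma bij_betw_ds_coords:
  assumes "\<forall>k\<in>{0..n}. subspace (A k)" "independent_summands {0..n} A"
  shows "bij_betw (ds_coords n A) (span (\<Union>k\<in>{0..n}. A k)) (ds_amb n A (A 0))"
proof -
  let ?g = "\<lambda>(f, r). sum f {1..n} + r"
  have coords: "ds_coords n A v \<in> ds_amb n A (A 0) \<and> ?g (ds_coords n A v) = v"
    if "decomposition {0..n} A a v" for a v
  proof -
    have "sum (a(0 := 0)) {1..n} = sum a {1..n}"
      by (intro sum.cong) auto
    then show ?thesis
      using that ds_coords_eq[OF assms that]
      by (auto simp: decomposition_def ds_amb_def sum_atLeast0_atMost add.commute)
  qed
  have decomp: "decomposition {0..n} A (f(0 := r)) (sum f {1..n} + r)"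
    if "(f, r) \<in> ds_amb n A (A 0)" for f r
  proof -
    have "sum (f(0 := r)) {1..n} = sum f {1..n}"
      by (intro sum.cong) auto
    then show ?thesis
      using that by (auto simp: decomposition_def ds_amb_def sum_atLeast0_atMost add.commute)
  qed
  show ?thesis
  proof (rule bij_betw_byWitness[where f' = ?g])
    show "\<forall>v\<in>span (\<Union>k\<in>{0..n}. A k). ?g (ds_coords n A v) = v"
      "ds_coords n A ` span (\<Union>k\<in>{0..n}. A k) \<subseteq> ds_amb n A (A 0)"
      using coords decomposition_exists[OF finite_atLeastAtMost assms(1)] by blast+
    show "?g ` ds_amb n A (A 0) \<subseteq> span (\<Union>k\<in>{0..n}. A k)"
    proof clarify
      fix f r assume "(f, r) \<in> ds_amb n A (A 0)"
      from decomposition_in_span[OF decomp[OF this]]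
      show "sum f {1..n} + r \<in> span (\<Union>k\<in>{0..n}. A k)" .
    qed
    show "\<forall>p\<in>ds_amb n A (A 0). ds_coords n A (?g p) = p"
    proof (clarify)
      fix f r assume fr: "(f, r) \<in> ds_amb n A (A 0)"
      then have "f 0 = 0"
        by (simp add: ds_amb_def)
      with ds_coords_eq[OF assms decomp[OF fr]]
      show "ds_coords n A (sum f {1..n} + r) = (f, r)"
        by (simp add: fun_upd_idem)
    qed
  qed
qed

lemma ds_coords_summand0:
  assumes "\<forall>k\<in>{0..n}. subspace (A k)" "independent_summands {0..n} A" "v \<in> A 0"
  shows "ds_coords n A v = ((\<lambda>_. 0), v)"
proof -
  have "decomposition {0..n} A (\<lambda>k. if k = 0 then v else 0) v"
    using assms(1,3) by (auto simp: decomposition_def subspace_0)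
  from ds_coords_eq[OF assms(1,2) this] show ?thesis
    by (simp add: fun_eq_iff)
qed

lemma ds_coords_image_sum:
  assumes "\<forall>k\<in>{0..n}. subspace (A k)" "independent_summands {0..n} A"
    and "j \<in> {1..n}" "R j \<subseteq> A 0" "W j \<subseteq> A j"
  shows "ds_coords n A ` {r + w |r w. r \<in> R j \<and> w \<in> W j} = ds_sub W R j"
proof -
  have coords: "ds_coords n A (r + w) = ((\<lambda>k. if k = j then w else 0), r)"
    if rw: "r \<in> R j" "w \<in> W j" for r w
  proof -
    let ?a = "\<lambda>k. if k = 0 then r else if k = j then w else 0"
    have "j \<noteq> 0" "j \<in> {0..n}"
      using assms(3) by auto
    then have "\<forall>k\<in>{0..n}. ?a k \<in> A k"
      using assms(1,4,5) rw by (auto simp: subspace_0)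
    moreover have "sum ?a {0..n} = r + w"
      using assms(3) by (simp add: sum_atLeast0_atMost)
    ultimately have "decomposition {0..n} A ?a (r + w)"
      using \<open>j \<in> {0..n}\<close> by (simp add: decomposition_def)
    from ds_coords_eq[OF assms(1,2) this] show ?thesis
      using \<open>j \<noteq> 0\<close> by (simp add: fun_eq_iff)
  qed
  show ?thesis
  proof
    show "ds_coords n A ` {r + w |r w. r \<in> R j \<and> w \<in> W j} \<subseteq> ds_sub W R j"
      using coords by (auto simp: ds_sub_def)
    show "ds_sub W R j \<subseteq> ds_coords n A ` {r + w |r w. r \<in> R j \<and> w \<in> W j}"
    proof clarify
      fix f r assume "(f, r) \<in> ds_sub W R j"
      then have fr: "f j \<in> W j" "r \<in> R j" and f: "f = (\<lambda>k. if k = j then f j else 0)"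
        by (auto simp: ds_sub_def)
      then have "(f, r) = ds_coords n A (r + f j)"
        using coords by metis
      then show "(f, r) \<in> ds_coords n A ` {r + w |r w. r \<in> R j \<and> w \<in> W j}"
        using fr by blast
    qed
  qed
qed

end

context vector_space
begin

lemma complement_subspace_exists:
  assumes "subspace U" "subspace S" "U \<subseteq> S"
  obtains C where "subspace C" "C \<subseteq> S" "U \<inter> C = {0}" "S = {u + c |u c. u \<in> U \<and> c \<in> C}"
proof -
  obtain B where B: "B \<subseteq> U" "independent B" "U \<subseteq> span B"
    using maximal_independent_subset by blast
  obtain B' where B': "B \<subseteq> B'" "B' \<subseteq> S" "independent B'" "S \<subseteq> span B'"
    using maximal_independent_subset_extend[of B S] B assms(3) by blast
  have U: "span B = U"
    using B assms(1) by (simp add: span_subspace)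
  define C where "C = span (B' - B)"
  have C: "subspace C" "C \<subseteq> S"
    using span_minimal[of "B' - B" S] B'(2) assms(2) unfolding C_def by auto
  have "U \<inter> C \<subseteq> {0}"
  proof
    fix x assume x: "x \<in> U \<inter> C"
    have "representation B' x = representation B x"
      using representation_extend[OF B'(3), of x B] x U B'(1) by auto
    moreover have "representation B' x = representation (B' - B) x"
      using representation_extend[OF B'(3), of x "B' - B"] x C_def by auto
    ultimately have "representation B' x b = 0" for b
      using representation_ne_zero[of B x b] representation_ne_zero[of "B' - B" x b] by auto
    moreover have "x \<in> span B'"
      using x U B'(1) span_mono by blast
    then have "x = (\<Sum>b | representation B' x b \<noteq> 0. representation B' x b *s b)"
      using sum_nonzero_representation_eq[OF B'(3)] by simp
    ultimately show "x \<in> {0}"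
      by simp
  qed
  moreover have "S = {u + c |u c. u \<in> U \<and> c \<in> C}"
  proof
    show "S \<subseteq> {u + c |u c. u \<in> U \<and> c \<in> C}"
      using B'(1,4) unfolding C_def U[symmetric] span_Un[symmetric] by (simp add: Un_absorb1)
    show "{u + c |u c. u \<in> U \<and> c \<in> C} \<subseteq> S"
      using assms C by (auto intro: subspace_add)
  qed
  ultimately show ?thesis
    using that C assms(1) subspace_0 by blast
qed

lemma independent_summands_extend_to_span:
  assumes "finite K" "k\<^sub>0 \<in> K" "\<forall>k\<in>K. subspace (B k)" "independent_summands K B"
    and "subspace V\<^sub>0" "\<forall>k\<in>K. B k \<subseteq> V\<^sub>0"
  obtains A where "\<forall>k\<in>K. subspace (A k)" "independent_summands K A"
    "\<forall>k. B k \<subseteq> A k" "\<forall>k. k \<noteq> k\<^sub>0 \<longrightarrow> A k = B k" "span (\<Union>k\<in>K. A k) = V\<^sub>0"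
proof -
  let ?S = "span (\<Union>k\<in>K. B k)"
  have "?S \<subseteq> V\<^sub>0"
    using assms(5,6) by (intro span_minimal) blast+
  then obtain D where D: "subspace D" "D \<subseteq> V\<^sub>0" "?S \<inter> D = {0}"
    "V\<^sub>0 = {s + d |s d. s \<in> ?S \<and> d \<in> D}"
    by (rule complement_subspace_exists[OF subspace_span assms(5)])
  define A where "A = B(k\<^sub>0 := {d + x |d x. d \<in> D \<and> x \<in> B k\<^sub>0})"
  have "\<forall>k\<in>K. subspace (A k)"
    using assms(2,3) D(1) by (auto simp: A_def intro: subspace_sums)
  moreover have "independent_summands K A"
    unfolding A_def using assms(1-4) D(1,3) by (rule independent_summands_merge_complement)
  moreover have B_A: "\<forall>k. B k \<subseteq> A k"
    using D(1) subspace_0 by (force simp: A_def)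
  moreover have "\<forall>k. k \<noteq> k\<^sub>0 \<longrightarrow> A k = B k"
    by (simp add: A_def)
  moreover have "span (\<Union>k\<in>K. A k) = V\<^sub>0"
  proof
    have "A k \<subseteq> V\<^sub>0" if "k \<in> K" for k
      using that assms(2,5,6) D(2) by (auto simp: A_def intro: subspace_add)
    then show "span (\<Union>k\<in>K. A k) \<subseteq> V\<^sub>0"
      using assms(5) by (intro span_minimal) blast+
    have "?S \<subseteq> span (\<Union>k\<in>K. A k)"
      using B_A by (intro span_mono) blast
    moreover have "D \<subseteq> A k\<^sub>0"
      using assms(2,3) subspace_0 by (force simp: A_def)
    then have "D \<subseteq> span (\<Union>k\<in>K. A k)"
      using assms(2) span_superset[of "\<Union>k\<in>K. A k"] by blast
    ultimately show "V\<^sub>0 \<subseteq> span (\<Union>k\<in>K. A k)"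
      by (subst D(4)) (auto intro: span_add)
  qed
  ultimately show ?thesis
    by (rule that)
qed

lemma independent_summands_rigid_complements:
  assumes "\<forall>i\<in>{1..n}. subspace (V i)"
    and "\<forall>i\<in>{1..n}. C i \<subseteq> V i \<and> rig_sub scale n V i \<inter> C i = {0}"
  shows "independent_summands {0..n} (C(0 := rig_amb scale n V))"
  unfolding independent_summands_def
proof (intro allI impI)
  let ?R = "rig_sub scale n V"
  fix a assume a: "decomposition {0..n} (C(0 := rig_amb scale n V)) a 0"
  have R_sub: "\<forall>i\<in>{1..n}. subspace (?R i)"
    using assms(1) by (auto simp: rig_sub_def intro: subspace_inter)
  have "a 0 \<in> span (\<Union>i\<in>{1..n}. ?R i)"
    using decomposition_component[OF a, of 0] by (simp add: rig_amb_def)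
  then obtain r where r: "decomposition {1..n} ?R r (a 0)"
    using decomposition_exists[OF finite_atLeastAtMost R_sub] by blast
  have a_C: "a i \<in> C i" if "i \<in> {1..n}" for i
    using decomposition_component[OF a, of i] that by simp
  have r_R: "r i \<in> ?R i" if "i \<in> {1..n}" for i
    using r that by (simp add: decomposition_def)
  have "r i \<in> V i" if "i \<in> {1..n}" for i
    using r_R[OF that] by (simp add: rig_sub_def)
  then have "\<forall>i\<in>{1..n}. a i + r i \<in> V i"
    using assms a_C by (blast intro: subspace_add)
  moreover have "sum (\<lambda>i. a i + r i) {1..n} = 0"
    using a r by (simp add: decomposition_def sum.distrib sum_atLeast0_atMost add.commute)
  ultimately have ar_R: "a i + r i \<in> ?R i" if "i \<in> {1..n}" for i
    using sum_eq_0_imp_in_span_others[OF finite_atLeastAtMost that] that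
    by (simp add: rig_sub_def)
  have a_0: "a i = 0" if "i \<in> {1..n}" for i
  proof -
    have "(a i + r i) - r i \<in> ?R i"
      using R_sub that r_R ar_R subspace_diff by blast
    then have "a i \<in> ?R i \<inter> C i"
      using a_C[OF that] by simp
    then show ?thesis
      using assms(2) that by blast
  qed
  then have "a 0 = 0"
    using a by (simp add: decomposition_def sum_atLeast0_atMost)
  moreover have "a k = 0" if "k \<notin> {0..n}" for k
    using a that by (simp add: decomposition_def)
  ultimately show "a = (\<lambda>_. 0)"
    using a_0 by (metis atLeastAtMost_iff le0 less_one not_less)
qed

lemma rigid_complements_exist:
  assumes "\<forall>i\<in>{1..n}. subspace (V i)"
  obtains C where "\<forall>i\<in>{1..n}. subspace (C i) \<and> C i \<subseteq> V i \<and> rig_sub scale n V i \<inter> C i = {0} \<and>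
    V i = {r + c |r c. r \<in> rig_sub scale n V i \<and> c \<in> C i}"
proof -
  let ?R = "rig_sub scale n V"
  have "\<forall>i\<in>{1..n}. \<exists>C. subspace C \<and> C \<subseteq> V i \<and> ?R i \<inter> C = {0} \<and>
      V i = {r + c |r c. r \<in> ?R i \<and> c \<in> C}"
  proof
    fix i assume "i \<in> {1..n}"
    then have "subspace (?R i)" "subspace (V i)" "?R i \<subseteq> V i"
      using assms by (auto simp: rig_sub_def intro: subspace_inter)
    then obtain C where "subspace C" "C \<subseteq> V i" "?R i \<inter> C = {0}"
      "V i = {r + c |r c. r \<in> ?R i \<and> c \<in> C}"
      by (rule complement_subspace_exists)
    then show "\<exists>C. subspace C \<and> C \<subseteq> V i \<and> ?R i \<inter> C = {0} \<and>
        V i = {r + c |r c. r \<in> ?R i \<and> c \<in> C}"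
      by blast
  qed
  from bchoice[OF this] show ?thesis
    using that by (rule exE)
qed

lemma rigid_part_splits:
  assumes "n_subspace scale n V0 V" "1 \<le> n"
  obtains C A where
    "\<forall>i\<in>{1..n}. subspace (C i) \<and> C i \<subseteq> A i \<and>
       V i = {r + c |r c. r \<in> rig_sub scale n V i \<and> c \<in> C i}"
    "\<forall>k\<in>{0..n}. subspace (A k)" "independent_summands {0..n} A"
    "A 0 = rig_amb scale n V" "span (\<Union>k\<in>{0..n}. A k) = V0"
proof -
  let ?R\<^sub>0 = "rig_amb scale n V"
  have V: "subspace V0" "\<forall>i\<in>{1..n}. subspace (V i) \<and> V i \<subseteq> V0"
    using assms(1) by (auto simp: n_subspace_def)
  then have "\<forall>i\<in>{1..n}. subspace (V i)"
    by blast
  then obtain C where C: "\<forall>i\<in>{1..n}. subspace (C i) \<and> C i \<subseteq> V i \<and>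
      rig_sub scale n V i \<inter> C i = {0} \<and> V i = {r + c |r c. r \<in> rig_sub scale n V i \<and> c \<in> C i}"
    by (rule rigid_complements_exist)
  define B where "B = C(0 := ?R\<^sub>0)"
  have B_sub: "\<forall>k\<in>{0..n}. subspace (B k)"
    using C by (auto simp: B_def rig_amb_def)
  have B_ind: "independent_summands {0..n} B"
    unfolding B_def using V(2) C by (intro independent_summands_rigid_complements) blast+
  have "?R\<^sub>0 \<subseteq> V0"
    unfolding rig_amb_def rig_sub_def using V by (intro span_minimal) auto
  then have B_V0: "B k \<subseteq> V0" if "k \<in> {0..n}" for k
  proof (cases "k = 0")
    case False
    with that have "k \<in> {1..n}" "B k = C k"
      by (auto simp: B_def)
    with C V(2) show ?thesis
      by blast
  qed (simp add: B_def)
  have "1 \<in> {0..n}"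
    using assms(2) by simp
  then obtain A where A: "\<forall>k\<in>{0..n}. subspace (A k)" "independent_summands {0..n} A"
    "\<forall>k. B k \<subseteq> A k" "\<forall>k. k \<noteq> 1 \<longrightarrow> A k = B k" "span (\<Union>k\<in>{0..n}. A k) = V0"
    using B_sub B_ind V(1) ballI[OF B_V0]
    by (rule independent_summands_extend_to_span[OF finite_atLeastAtMost])
  have "C i \<subseteq> A i" if "i \<in> {1..n}" for i
    using spec[OF A(3), of i] that by (simp add: B_def)
  with C have "\<forall>i\<in>{1..n}. subspace (C i) \<and> C i \<subseteq> A i \<and>
      V i = {r + c |r c. r \<in> rig_sub scale n V i \<and> c \<in> C i}"
    by blast
  moreover have "A 0 = ?R\<^sub>0"
    using A(4) by (simp add: B_def)
  ultimately show ?thesis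
    using that A(1,2,5) by blast
qed

end


theorem proposition8p4:
  fixes scale :: "'k::field \<Rightarrow> 'v::ab_group_add \<Rightarrow> 'v"
    and n :: nat and V0 :: "'v set" and V :: "nat \<Rightarrow> 'v set"
  assumes "vector_space scale"
    and "n \<ge> 1"
    and "n_subspace scale n V0 V"
  shows "\<exists>(W0 :: nat \<Rightarrow> 'v set) (W1 :: nat \<Rightarrow> 'v set) (\<phi> :: 'v \<Rightarrow> (nat \<Rightarrow> 'v) \<times> 'v).
    (\<forall>i\<in>{1..n}. module.subspace scale (W0 i) \<and> module.subspace scale (W1 i) \<and> W1 i \<subseteq> W0 i) \<and>
    (\<forall>x\<in>V0. \<forall>y\<in>V0. \<phi> (x + y) = ds_add (\<phi> x) (\<phi> y)) \<and>
    (\<forall>c. \<forall>x\<in>V0. \<phi> (scale c x) = ds_scale scale c (\<phi> x)) \<and>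
    bij_betw \<phi> V0 (ds_amb n W0 (rig_amb scale n V)) \<and>
    (\<forall>j\<in>{1..n}. \<phi> ` V j = ds_sub W1 (rig_sub scale n V) j) \<and>
    (\<forall>v\<in>rig_amb scale n V. \<phi> v = ((\<lambda>_. 0), v))"
proof -
  interpret vector_space scale by fact
  obtain C A where C: "\<forall>i\<in>{1..n}. subspace (C i) \<and> C i \<subseteq> A i \<and>
       V i = {r + c |r c. r \<in> rig_sub scale n V i \<and> c \<in> C i}"
    and sub: "\<forall>k\<in>{0..n}. subspace (A k)" and ind: "independent_summands {0..n} A"
    and A0: "A 0 = rig_amb scale n V" and V0: "span (\<Union>k\<in>{0..n}. A k) = V0"
    using rigid_part_splits[OF assms(3,2)] by blast
  have R_A0: "rig_sub scale n V j \<subseteq> A 0" if "j \<in> {1..n}" for j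
    unfolding A0 rig_amb_def using that by (blast intro: span_base)
  show ?thesis
  proof (intro exI conjI)
    show "\<forall>i\<in>{1..n}. subspace (A i) \<and> subspace (C i) \<and> C i \<subseteq> A i"
      using C sub by auto
    show "\<forall>x\<in>V0. \<forall>y\<in>V0. ds_coords n A (x + y) = ds_add (ds_coords n A x) (ds_coords n A y)"
      using ds_coords_add[OF sub ind] V0 by blast
    show "\<forall>c. \<forall>x\<in>V0. ds_coords n A (scale c x) = ds_scale scale c (ds_coords n A x)"
      using ds_coords_scale[OF sub ind] V0 by blast
    show "bij_betw (ds_coords n A) V0 (ds_amb n A (rig_amb scale n V))"
      using bij_betw_ds_coords[OF sub ind] V0 A0 by simp
    show "\<forall>j\<in>{1..n}. ds_coords n A ` V j = ds_sub C (rig_sub scale n V) j"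
      using ds_coords_image_sum[OF sub ind] C R_A0 by auto
    show "\<forall>v\<in>rig_amb scale n V. ds_coords n A v = ((\<lambda>_. 0), v)"
      using ds_coords_summand0[OF sub ind] A0 by blast
  qed
qed

end
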